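(* Let $\varepsilon>0$, grant (NormEq) with constant $C'$ and (Hi) with parameters $r$ and $\alpha$, and assume that the oracle is the Bayes rule, i.e. $f^*(x)=\mathrm{sign}(2\eta(x)-1)$ for all $x\in\mathcal X$. Then every $f\in F$ with $\|f-f^*\|_{L_2}\le r$ satisfies $\|f-f^*\|_{L_2}^2\le\frac2\alpha P\mathcal L_f$.
   Context: Setting: $F$ is a convex class of measurable functions $\mathcal X\to\mathbb R$, $\mathcal Y=\{-1,1\}$, $(X,Y)\sim P$, $X\sim\mu$, $\|g\|_{L_p}=(\mathbb E|g(X)|^p)^{1/p}$, $\eta(x)=\mathbb P(Y=1\mid X=x)$. The hinge loss is $\ell_f(x,y)=\max(1-yf(x),0)$. $f^*$ is the minimizer of $f\mapsto P\ell_f$ over $F$, $\mathcal L_f=\ell_f-\ell_{f^*}$, $P\mathcal L_f=\mathbb E\mathcal L_f(X,Y)$. (NormEq): there is $C'>0$ such that $\|f-f^*\|_{L_{2+\varepsilon}}\le C'\|f-f^*\|_{L_2}$ for all $f\in F$. (Hi): there exist $\alpha>0$ and $0<r\le(\sqrt2C')^{-(2+\varepsilon)/\varepsilon}$ such that for all $x\in\mathcal X$, $\min(\eta(x),1-\eta(x),|1-2\eta(x)|)\ge\alpha$. *)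

theory Defs
  imports "HOL-Probability.Probability"
begin

definition convex_class :: "('a \<Rightarrow> real) set \<Rightarrow> bool" where
  "convex_class F \<longleftrightarrow>
     (\<forall>f\<in>F. \<forall>g\<in>F. \<forall>t::real. 0 \<le> t \<and> t \<le> 1 \<longrightarrow> (\<lambda>x. t * f x + (1 - t) * g x) \<in> F)"

definition Lnorm :: "'a measure \<Rightarrow> real \<Rightarrow> ('a \<Rightarrow> real) \<Rightarrow> ennreal" where
  "Lnorm M p g =
     (let I = (\<integral>\<^sup>+ x. ennreal (\<bar>g x\<bar> powr p) \<partial>M)
      in if I = \<infinity> then \<infinity> else ennreal (enn2real I powr (1 / p)))"

definition hinge :: "real \<Rightarrow> real \<Rightarrow> real" where
  "hinge t y = max (1 - y * t) 0"

text \<open>Hinge risk P l_f for (X,Y) with X ~ M and P(Y = 1 | X = x) = eta x.\<close>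
definition hinge_risk :: "'a measure \<Rightarrow> ('a \<Rightarrow> real) \<Rightarrow> ('a \<Rightarrow> real) \<Rightarrow> ennreal" where
  "hinge_risk M eta f =
     (\<integral>\<^sup>+ x. ennreal (eta x * hinge (f x) 1 + (1 - eta x) * hinge (f x) (-1)) \<partial>M)"

definition excess_risk :: "'a measure \<Rightarrow> ('a \<Rightarrow> real) \<Rightarrow> ('a \<Rightarrow> real) \<Rightarrow> ('a \<Rightarrow> real) \<Rightarrow> real" where
  "excess_risk M eta fstar f =
     (\<integral> x. eta x * (hinge (f x) 1 - hinge (fstar x) 1)
          + (1 - eta x) * (hinge (f x) (-1) - hinge (fstar x) (-1)) \<partial>M)"

end

theory Submission
  imports Defs
begin

text \<open>At the Bayes rule \<open>f\<^sup>*(x) = sgn(2\<eta>(x) - 1)\<close> the conditional excess hinge loss dominates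
  \<open>\<alpha> |f(x) - f\<^sup>*(x)|\<close>, by (Hi). Writing \<open>d = f - f\<^sup>*\<close>, we have \<open>d\<^sup>2 \<le> |d|\<close> where \<open>|d| \<le> 1\<close> and
  \<open>d\<^sup>2 \<le> |d|\<^bsup>2+\<epsilon>\<^esup>\<close> elsewhere, so \<open>\<parallel>d\<parallel>\<^sub>2\<^sup>2 \<le> P\<L>\<^sub>f/\<alpha> + \<parallel>d\<parallel>\<^bsub>2+\<epsilon>\<^esub>\<^bsup>2+\<epsilon>\<^esup>\<close>. By (NormEq) the last
  term is at most \<open>(C' \<parallel>d\<parallel>\<^sub>2)\<^bsup>2+\<epsilon>\<^esup>\<close>, which is at most \<open>\<parallel>d\<parallel>\<^sub>2\<^sup>2 / 2\<close> as soon as \<open>\<parallel>d\<parallel>\<^sub>2 \<le> r\<close>;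
  absorbing it into the left-hand side gives the claim.\<close>

definition cond_hinge_excess :: "real \<Rightarrow> real \<Rightarrow> real \<Rightarrow> real" where
  "cond_hinge_excess e s t = e * (hinge t 1 - hinge s 1) + (1 - e) * (hinge t (-1) - hinge s (-1))"

lemma excess_risk_eq_integral_cond_hinge_excess:
  "excess_risk M eta fstar f = (\<integral>x. cond_hinge_excess (eta x) (fstar x) (f x) \<partial>M)"
  unfolding excess_risk_def cond_hinge_excess_def ..

lemma hinge_diff_abs_le:
  assumes "y = 1 \<or> y = -1"
  shows "\<bar>hinge t y - hinge s y\<bar> \<le> \<bar>t - s\<bar>"
  using assms by (auto simp: hinge_def max_def)

lemma abs_cond_hinge_excess_le:
  assumes "0 \<le> e" "e \<le> 1"
  shows "\<bar>cond_hinge_excess e s t\<bar> \<le> \<bar>t - s\<bar>"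
proof -
  have "\<bar>cond_hinge_excess e s t\<bar> \<le> e * \<bar>hinge t 1 - hinge s 1\<bar> + (1 - e) * \<bar>hinge t (-1) - hinge s (-1)\<bar>"
    unfolding cond_hinge_excess_def using assms
    by (metis abs_mult abs_of_nonneg abs_triangle_ineq diff_ge_0_iff_ge)
  also have "\<dots> \<le> e * \<bar>t - s\<bar> + (1 - e) * \<bar>t - s\<bar>"
    using assms by (intro add_mono mult_left_mono hinge_diff_abs_le) auto
  finally show ?thesis by (simp add: algebra_simps)
qed

lemma square_le_abs_plus_powr:
  fixes y \<epsilon> :: real
  assumes "\<epsilon> \<ge> 0"
  shows "y\<^sup>2 \<le> \<bar>y\<bar> + \<bar>y\<bar> powr (2 + \<epsilon>)"
proof (cases "\<bar>y\<bar> \<le> 1")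
  case True
  then have "y\<^sup>2 \<le> \<bar>y\<bar>"
    by (metis abs_ge_zero mult_left_le power2_abs power2_eq_square)
  then show ?thesis
    using powr_ge_zero[of "\<bar>y\<bar>" "2 + \<epsilon>"] by linarith
next
  case False
  then have "y\<^sup>2 * 1 \<le> y\<^sup>2 * \<bar>y\<bar> powr \<epsilon>"
    using assms by (intro mult_left_mono ge_one_powr_ge_zero) auto
  also have "\<dots> = \<bar>y\<bar> powr (2 + \<epsilon>)"
    using False by (simp add: powr_add powr_numeral)
  finally show ?thesis by simp
qed

lemma cond_hinge_excess_ge_margin_dist:
  assumes "\<alpha> > 0" and "min e (min (1 - e) \<bar>1 - 2 * e\<bar>) \<ge> \<alpha>"
  shows "\<alpha> * \<bar>t - sgn (2 * e - 1)\<bar> \<le> cond_hinge_excess e (sgn (2 * e - 1)) t"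
proof (cases "e > 1/2")
  case True
  have "\<alpha> * \<bar>t - 1\<bar> \<le> e * (max (1 - t) 0) + (1 - e) * (max (1 + t) 0 - 2)"
  proof (cases "t \<ge> 1")
    case True
    then show ?thesis using assms \<open>e > 1/2\<close> mult_right_mono[of \<alpha> "1 - e" "t - 1"] by auto
  next
    case False
    then show ?thesis using assms \<open>e > 1/2\<close> mult_right_mono[of \<alpha> "2 * e - 1" "1 - t"]
      mult_right_mono[of \<alpha> e "- 1 - t"]
      by (cases "t \<ge> -1"; cases "t = -1") (auto simp: max_def algebra_simps)
  qed
  with True show ?thesis by (simp add: cond_hinge_excess_def hinge_def)
next
  case False
  have "\<alpha> * \<bar>t + 1\<bar> \<le> e * (max (1 - t) 0 - 2) + (1 - e) * (max (1 + t) 0)"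
  proof (cases "t \<le> -1")
    case True
    then show ?thesis using assms False mult_right_mono[of \<alpha> e "- 1 - t"] by (auto simp: algebra_simps)
  next
    case False
    then show ?thesis using assms \<open>\<not> e > 1/2\<close> mult_right_mono[of \<alpha> "1 - 2 * e" "1 + t"]
      mult_right_mono[of \<alpha> "1 - e" "t - 1"]
      by (cases "t \<le> 1"; cases "t = 1") (auto simp: max_def algebra_simps)
  qed
  moreover have "e \<noteq> 1/2" using assms by auto
  ultimately show ?thesis using False by (simp add: cond_hinge_excess_def hinge_def)
qed

lemma (in finite_measure) integrable_cond_hinge_excess:
  assumes [measurable]: "eta \<in> borel_measurable M" "f \<in> borel_measurable M" "g \<in> borel_measurable M"
    and eta_range: "\<And>x. x \<in> space M \<Longrightarrow> 0 \<le> eta x \<and> eta x \<le> 1"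
    and square_int: "integrable M (\<lambda>x. (f x - g x)\<^sup>2)"
  shows "integrable M (\<lambda>x. cond_hinge_excess (eta x) (g x) (f x))"
proof (rule Bochner_Integration.integrable_bound)
  show "integrable M (\<lambda>x. \<bar>f x - g x\<bar>)"
    using square_integrable_imp_integrable[OF _ square_int] by simp
  show "(\<lambda>x. cond_hinge_excess (eta x) (g x) (f x)) \<in> borel_measurable M"
    unfolding cond_hinge_excess_def hinge_def by measurable
  show "AE x in M. norm (cond_hinge_excess (eta x) (g x) (f x)) \<le> norm \<bar>f x - g x\<bar>"
    using eta_range abs_cond_hinge_excess_le by (intro AE_I2) auto
qed

lemma Lnorm_eq_integral_powr:
  fixes g :: "'a \<Rightarrow> real"
  assumes [measurable]: "g \<in> borel_measurable M" and finite: "Lnorm M p g \<noteq> \<infinity>"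
  shows "integrable M (\<lambda>x. \<bar>g x\<bar> powr p)"
    and "Lnorm M p g = ennreal ((\<integral>x. \<bar>g x\<bar> powr p \<partial>M) powr (1 / p))"
proof -
  let ?I = "\<integral>\<^sup>+ x. ennreal (\<bar>g x\<bar> powr p) \<partial>M"
  have "?I \<noteq> \<infinity>"
    using finite by (auto simp: Lnorm_def Let_def)
  then show int: "integrable M (\<lambda>x. \<bar>g x\<bar> powr p)"
    by (intro integrableI_nonneg) (auto simp: top.not_eq_extremum)
  have "?I = ennreal (\<integral>x. \<bar>g x\<bar> powr p \<partial>M)"
    by (intro nn_integral_eq_integral int) simp
  then show "Lnorm M p g = ennreal ((\<integral>x. \<bar>g x\<bar> powr p \<partial>M) powr (1 / p))"
    by (simp add: Lnorm_def Let_def)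
qed

lemma Lnorm_le_imp_integral_powr_le:
  fixes g :: "'a \<Rightarrow> real"
  assumes "g \<in> borel_measurable M" and "p > 0" and "c \<ge> 0" and "Lnorm M p g \<le> ennreal c"
  shows "integrable M (\<lambda>x. \<bar>g x\<bar> powr p)"
    and "(\<integral>x. \<bar>g x\<bar> powr p \<partial>M) \<le> c powr p"
proof -
  have finite: "Lnorm M p g \<noteq> \<infinity>"
    using assms(4) by (auto simp: top_unique)
  then show "integrable M (\<lambda>x. \<bar>g x\<bar> powr p)"
    by (rule Lnorm_eq_integral_powr(1)[OF assms(1)])
  define m where "m = (\<integral>x. \<bar>g x\<bar> powr p \<partial>M)"
  have "m \<ge> 0"
    unfolding m_def by simp
  have "m powr (1 / p) \<le> c"
    using Lnorm_eq_integral_powr(2)[OF assms(1) finite] assms(3,4) by (simp add: m_def)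
  then have "(m powr (1 / p)) powr p \<le> c powr p"
    using assms(2) by (intro powr_mono2) auto
  then show "m \<le> c powr p"
    using \<open>m \<ge> 0\<close> assms(2) by (simp add: powr_powr)
qed

lemma powr_le_half_square:
  fixes \<epsilon> C N :: real
  assumes "\<epsilon> > 0" and "C > 0" and "N \<ge> 0" and N_le: "N \<le> (sqrt 2 * C) powr (- (2 + \<epsilon>) / \<epsilon>)"
  shows "(C * N) powr (2 + \<epsilon>) \<le> N\<^sup>2 / 2"
proof (cases "N = 0")
  case False
  have "N powr \<epsilon> \<le> ((sqrt 2 * C) powr (- (2 + \<epsilon>) / \<epsilon>)) powr \<epsilon>"
    using assms by (intro powr_mono2) auto
  also have "\<dots> = (sqrt 2 * C) powr (- (2 + \<epsilon>))"
    using assms by (simp add: powr_powr)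
  finally have N_powr: "N powr \<epsilon> \<le> (sqrt 2 * C) powr (- (2 + \<epsilon>))" .
  have "(C * N) powr (2 + \<epsilon>) = C powr (2 + \<epsilon>) * N powr \<epsilon> * N\<^sup>2"
    using assms False by (simp add: powr_mult powr_add powr_numeral)
  also have "\<dots> \<le> C powr (2 + \<epsilon>) * (sqrt 2 * C) powr (- (2 + \<epsilon>)) * N\<^sup>2"
    using N_powr by (intro mult_right_mono mult_left_mono) auto
  also have "\<dots> = sqrt 2 powr (- (2 + \<epsilon>)) * N\<^sup>2"
    using assms by (simp add: powr_mult powr_add[symmetric])
  also have "\<dots> = 2 powr (- (2 + \<epsilon>) / 2) * N\<^sup>2"
    by (simp add: powr_half_sqrt[symmetric] powr_powr)
  also have "\<dots> \<le> 2 powr (- 1) * N\<^sup>2"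
    using assms by (intro mult_right_mono powr_mono) auto
  finally show ?thesis
    by (simp add: powr_minus_divide)
qed simp

lemma second_moment_le_excess:
  fixes d e :: "'a \<Rightarrow> real"
  assumes int: "integrable M (\<lambda>x. (d x)\<^sup>2)" "integrable M (\<lambda>x. \<bar>d x\<bar> powr (2 + \<epsilon>))" "integrable M e"
    and "\<epsilon> \<ge> 0" and "\<alpha> > 0" and margin: "\<And>x. x \<in> space M \<Longrightarrow> \<alpha> * \<bar>d x\<bar> \<le> e x"
    and moment: "(\<integral>x. \<bar>d x\<bar> powr (2 + \<epsilon>) \<partial>M) \<le> (\<integral>x. (d x)\<^sup>2 \<partial>M) / 2"
  shows "(\<integral>x. (d x)\<^sup>2 \<partial>M) \<le> 2 / \<alpha> * (\<integral>x. e x \<partial>M)"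
proof -
  have pointwise: "(d x)\<^sup>2 \<le> e x / \<alpha> + \<bar>d x\<bar> powr (2 + \<epsilon>)" if "x \<in> space M" for x
  proof -
    have "\<bar>d x\<bar> \<le> e x / \<alpha>"
      using margin[OF that] \<open>\<alpha> > 0\<close> by (simp add: field_simps)
    then show ?thesis
      using square_le_abs_plus_powr[OF \<open>\<epsilon> \<ge> 0\<close>, of "d x"] by linarith
  qed
  have "(\<integral>x. (d x)\<^sup>2 \<partial>M) \<le> (\<integral>x. e x / \<alpha> + \<bar>d x\<bar> powr (2 + \<epsilon>) \<partial>M)"
    using int pointwise by (intro integral_mono) auto
  also have "\<dots> = (\<integral>x. e x \<partial>M) / \<alpha> + (\<integral>x. \<bar>d x\<bar> powr (2 + \<epsilon>) \<partial>M)"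
    using int by simp
  also have "\<dots> \<le> (\<integral>x. e x \<partial>M) / \<alpha> + (\<integral>x. (d x)\<^sup>2 \<partial>M) / 2"
    using moment by simp
  finally show ?thesis
    using \<open>\<alpha> > 0\<close> by (simp add: field_simps)
qed

theorem theorem9:
  fixes M :: "'a measure" and eta :: "'a \<Rightarrow> real" and F :: "('a \<Rightarrow> real) set"
    and fstar :: "'a \<Rightarrow> real" and \<epsilon> C' \<alpha> r :: real
  assumes prob: "prob_space M"
    and eta_meas: "eta \<in> borel_measurable M"
    and eta_range: "\<And>x. x \<in> space M \<Longrightarrow> 0 \<le> eta x \<and> eta x \<le> 1"
    and F_meas: "F \<subseteq> borel_measurable M"
    and F_convex: "convex_class F"
    and fstar_in: "fstar \<in> F"
    and fstar_min: "\<And>f. f \<in> F \<Longrightarrow> hinge_risk M eta fstar \<le> hinge_risk M eta f"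
    and eps_pos: "\<epsilon> > 0"
    and NormEq: "C' > 0"
      "\<And>f. f \<in> F \<Longrightarrow> Lnorm M (2 + \<epsilon>) (\<lambda>x. f x - fstar x)
                         \<le> ennreal C' * Lnorm M 2 (\<lambda>x. f x - fstar x)"
    and Hi: "\<alpha> > 0" "r > 0" "r \<le> (sqrt 2 * C') powr (- (2 + \<epsilon>) / \<epsilon>)"
      "\<And>x. x \<in> space M \<Longrightarrow> min (eta x) (min (1 - eta x) \<bar>1 - 2 * eta x\<bar>) \<ge> \<alpha>"
    and bayes: "\<And>x. x \<in> space M \<Longrightarrow> fstar x = sgn (2 * eta x - 1)"
  shows "\<And>f. f \<in> F \<Longrightarrow> Lnorm M 2 (\<lambda>x. f x - fstar x) \<le> ennreal r \<Longrightarrow>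
           (Lnorm M 2 (\<lambda>x. f x - fstar x))\<^sup>2 \<le> ennreal (2 / \<alpha> * excess_risk M eta fstar f)"
proof -
  fix f assume "f \<in> F" and small: "Lnorm M 2 (\<lambda>x. f x - fstar x) \<le> ennreal r"
  interpret prob_space M by (rule prob)
  define d where "d = (\<lambda>x. f x - fstar x)"
  have [measurable]: "f \<in> borel_measurable M" "fstar \<in> borel_measurable M"
    using F_meas \<open>f \<in> F\<close> fstar_in by auto
  have d_meas: "d \<in> borel_measurable M"
    unfolding d_def by measurable
  define N where "N = sqrt (\<integral>x. (d x)\<^sup>2 \<partial>M)"
  have "Lnorm M 2 d \<noteq> \<infinity>"
    using small unfolding d_def by (auto simp: top_unique)
  from Lnorm_eq_integral_powr[OF d_meas this]
  have square_int: "integrable M (\<lambda>x. (d x)\<^sup>2)" and L2: "Lnorm M 2 d = ennreal N"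
    by (simp_all add: N_def powr_half_sqrt)
  have "N \<ge> 0" "N\<^sup>2 = (\<integral>x. (d x)\<^sup>2 \<partial>M)"
    by (simp_all add: N_def)
  have "N \<le> r"
    using small L2 Hi(2) unfolding d_def[symmetric] by simp
  have "Lnorm M (2 + \<epsilon>) d \<le> ennreal (C' * N)"
    using NormEq(1) NormEq(2)[OF \<open>f \<in> F\<close>] L2 \<open>N \<ge> 0\<close> unfolding d_def by (simp add: ennreal_mult)
  from Lnorm_le_imp_integral_powr_le[OF d_meas _ _ this] eps_pos NormEq(1) \<open>N \<ge> 0\<close>
  have moment_int: "integrable M (\<lambda>x. \<bar>d x\<bar> powr (2 + \<epsilon>))"
    and "(\<integral>x. \<bar>d x\<bar> powr (2 + \<epsilon>) \<partial>M) \<le> (C' * N) powr (2 + \<epsilon>)"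
    by auto
  with powr_le_half_square[OF eps_pos NormEq(1) \<open>N \<ge> 0\<close> order.trans[OF \<open>N \<le> r\<close> Hi(3)]] \<open>N\<^sup>2 = _\<close>
  have "(\<integral>x. \<bar>d x\<bar> powr (2 + \<epsilon>) \<partial>M) \<le> (\<integral>x. (d x)\<^sup>2 \<partial>M) / 2"
    by linarith
  then have "(\<integral>x. (d x)\<^sup>2 \<partial>M) \<le> 2 / \<alpha> * excess_risk M eta fstar f"
    unfolding excess_risk_eq_integral_cond_hinge_excess
    using square_int moment_int eps_pos Hi(1)
      integrable_cond_hinge_excess[OF eta_meas _ _ eta_range, of f fstar]
      cond_hinge_excess_ge_margin_dist[OF Hi(1) Hi(4), of _ "f _"] bayes
    by (intro second_moment_le_excess) (auto simp: d_def)
  then show "(Lnorm M 2 (\<lambda>x. f x - fstar x))\<^sup>2 \<le> ennreal (2 / \<alpha> * excess_risk M eta fstar f)"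
    using L2 \<open>N\<^sup>2 = _\<close> \<open>N \<ge> 0\<close> unfolding d_def by (simp add: ennreal_power ennreal_leI)
qed

end
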